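(* For every real $y\ge0$, $\displaystyle\sum_{k,\ell\in\mathbb{N}}\frac{y^{k\ell}}{(k!)^\ell\,\ell!}<\infty$. Moreover, $\displaystyle\sum_{k,\ell\in\mathbb{N}}\frac{1}{(k!)^\ell\,\ell!}\le e^2$.
   Context: $\mathbb{N}=\{1,2,3,\dots\}$. *)

theory Defs
  imports "HOL-Analysis.Analysis"
begin

end

theory Submission
  imports Defs
begin

text \<open>Writing \<open>t\<^sub>k = y\<^sup>k / k!\<close>, the summand is \<open>t\<^sub>k\<^sup>l / l!\<close>. Every \<open>t\<^sub>k\<close> is a single term
  of the exponential series, so \<open>t\<^sub>k \<le> C\<close> with \<open>C = max 1 (exp y)\<close>, and for \<open>l \<ge> 1\<close>
  the summand is at most \<open>t\<^sub>k \<cdot> C\<^sup>l / l!\<close>. This dominating family is a product of two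
  tails of exponential series, hence summable. For \<open>y = 1\<close> one may take \<open>C = 1\<close>, and the
  sum is at most \<open>(e - 1)\<^sup>2 \<le> e\<^sup>2\<close>.\<close>

lemma has_sum_exp:
  fixes x :: real
  shows "((\<lambda>n. x ^ n / fact n) has_sum exp x) UNIV"
proof (rule norm_summable_imp_has_sum)
  show "summable (\<lambda>n. norm (x ^ n / fact n))"
    using summable_norm_exp[of x] by (simp add: divide_inverse mult.commute)
  show "(\<lambda>n. x ^ n / fact n) sums exp x"
    using exp_converges[of x] by (simp add: divide_inverse mult.commute)
qed

lemma has_sum_exp_minus_one:
  fixes x :: real
  shows "((\<lambda>n. x ^ n / fact n) has_sum (exp x - 1)) {1..}"
proof -
  have "((\<lambda>n. x ^ n / fact n) has_sum (exp x - 1)) (UNIV - {0})"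
    using has_sum_Diff[OF has_sum_exp has_sum_finite[of "{0}"]] by simp
  moreover have "UNIV - {0} = {1::nat..}"
    by auto
  ultimately show ?thesis
    by simp
qed

lemma power_div_fact_le_exp:
  fixes x :: real
  assumes "x \<ge> 0"
  shows "x ^ k / fact k \<le> exp x"
  using has_sum_mono'[OF has_sum_finite[of "{k}"] has_sum_exp] assms by simp

lemma has_sum_product_nonneg:
  fixes f :: "'a \<Rightarrow> real" and g :: "'b \<Rightarrow> real"
  assumes f: "(f has_sum a) A" and g: "(g has_sum b) B"
    and f_nonneg: "\<And>x. x \<in> A \<Longrightarrow> f x \<ge> 0" and g_nonneg: "\<And>y. y \<in> B \<Longrightarrow> g y \<ge> 0"
  shows "((\<lambda>(x, y). f x * g y) has_sum (a * b)) (A \<times> B)"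
proof -
  have rows: "((\<lambda>y. (\<lambda>(x, y). f x * g y) (x, y)) has_sum f x * b) B" for x
    using has_sum_cmult_right[OF g, of "f x"] by simp
  have cols: "((\<lambda>x. f x * b) has_sum a * b) A"
    using has_sum_cmult_left[OF f] .
  have "(\<lambda>(x, y). f x * g y) summable_on A \<times> B"
    by (rule summable_on_SigmaI[OF rows has_sum_imp_summable[OF cols]])
      (simp add: f_nonneg g_nonneg)
  then show ?thesis
    by (rule has_sum_SigmaI[OF rows cols])
qed

lemma power_le_mult_power:
  fixes a C :: real
  assumes "0 \<le> a" "a \<le> C" "1 \<le> C" "l \<ge> 1"
  shows "a ^ l \<le> a * C ^ l"
proof -
  obtain m where l: "l = Suc m"
    using assms(4) by (cases l) auto
  have "a ^ m \<le> C ^ m"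
    using assms by (intro power_mono) auto
  also have "\<dots> \<le> C ^ Suc m"
    using assms by (intro power_increasing) auto
  finally have "a ^ m \<le> C ^ Suc m" .
  then show ?thesis
    using l assms(1) by (simp add: mult_left_mono)
qed

lemma summand_le_product:
  fixes y C :: real
  assumes "y \<ge> 0" "y ^ k / fact k \<le> C" "1 \<le> C" "l \<ge> 1"
  shows "y ^ (k * l) / (fact k ^ l * fact l) \<le> y ^ k / fact k * (C ^ l / fact l)"
proof -
  have "(y ^ k / fact k) ^ l \<le> y ^ k / fact k * C ^ l"
    by (rule power_le_mult_power) (use assms in auto)
  then have "(y ^ k / fact k) ^ l / fact l \<le> y ^ k / fact k * C ^ l / fact l"
    by (rule divide_right_mono) simp
  then show ?thesis
    by (simp add: power_mult power_divide)
qed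

lemma summable_on_double_series:
  fixes y :: real
  assumes y: "y \<ge> 0"
  shows "(\<lambda>(k::nat, l::nat). y ^ (k * l) / ((fact k) ^ l * fact l)) summable_on ({1..} \<times> {1..})"
proof -
  define C where "C = max 1 (exp y)"
  have C_ge_1: "C \<ge> 1"
    by (simp add: C_def)
  then have "((\<lambda>(k, l). y ^ k / fact k * (C ^ l / fact l)) has_sum (exp y - 1) * (exp C - 1))
      ({1::nat..} \<times> {1::nat..})"
    using y by (intro has_sum_product_nonneg has_sum_exp_minus_one) auto
  then have dominating: "(\<lambda>(k, l). y ^ k / fact k * (C ^ l / fact l)) summable_on ({1::nat..} \<times> {1::nat..})"
    by (rule has_sum_imp_summable)
  have term_le_C: "y ^ k / fact k \<le> C" for k
    using power_div_fact_le_exp[OF y, of k] by (simp add: C_def)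
  show ?thesis
    by (intro summable_on_comparison_test[OF dominating])
      (use y summand_le_product[OF y term_le_C C_ge_1] in auto)
qed

lemma double_series_at_one_le:
  "(\<Sum>\<^sub>\<infinity>(k::nat, l::nat)\<in>{1..} \<times> {1..}. 1 / ((fact k) ^ l * fact l :: real)) \<le> (exp 1 - 1)\<^sup>2"
proof -
  have product: "((\<lambda>(k::nat, l::nat). 1 ^ k / fact k * (1 ^ l / fact l) :: real) has_sum (exp 1 - 1)\<^sup>2)
      ({1..} \<times> {1..})"
    unfolding power2_eq_square
    by (rule has_sum_product_nonneg[OF has_sum_exp_minus_one has_sum_exp_minus_one]) auto
  have "(\<lambda>(k::nat, l::nat). 1 / ((fact k) ^ l * fact l :: real)) summable_on ({1..} \<times> {1..})"
    using summable_on_double_series[of 1] by simp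
  then show ?thesis
    using summand_le_product[of 1 _ 1]
    by (intro has_sum_mono[OF has_sum_infsum product]) auto
qed

theorem lemma6p1:
  shows "(\<forall>y::real. y \<ge> 0 \<longrightarrow>
           (\<lambda>(k::nat, l::nat). y ^ (k * l) / ((fact k) ^ l * fact l))
             summable_on ({1..} \<times> {1..})) \<and>
         ((\<Sum>\<^sub>\<infinity>(k::nat, l::nat)\<in>{1..} \<times> {1..}. 1 / ((fact k) ^ l * fact l :: real)) \<le> exp 2)"
proof (intro conjI allI impI)
  show "(\<lambda>(k::nat, l::nat). y ^ (k * l) / ((fact k) ^ l * fact l)) summable_on ({1..} \<times> {1..})"
    if "y \<ge> 0" for y :: real
    using summable_on_double_series[OF that] .
  have "(exp 1 - 1)\<^sup>2 \<le> (exp 1 :: real)\<^sup>2"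
    by (rule power_mono) auto
  also have "\<dots> = exp 2"
    by (simp add: power2_eq_square flip: exp_add)
  finally show "(\<Sum>\<^sub>\<infinity>(k::nat, l::nat)\<in>{1..} \<times> {1..}. 1 / ((fact k) ^ l * fact l :: real)) \<le> exp 2"
    using double_series_at_one_le by linarith
qed

end
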